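(* For integers $j,r$ with $2\le j\le n-1$ and $0\le r\le j-2$, let $\pi_{j,r}=s_j\cdot s_{j-1}\cdots s_{j-r}$. Then $w_j\cdot\pi_{j,r}=\pi_{j,r}\cdot w_{j-r-1}$ and $\ell(w_j\cdot\pi_{j,r})=\ell(\pi_{j,r})+2(j-r-1)$.
   Context: $D_n$ ($n\ge2$) is the Coxeter group with generators $s_{1'},s_1,\dots,s_{n-1}$ and relations $s^2=1$, $(s_i s_{i+1})^3=1$, $(s_is_j)^2=1$ for $|i-j|\ge 2$, $(s_{1'}s_2)^3=1$, $(s_{1'}s_i)^2=1$ for $i\ne 2$. $w_k=s_k s_{k-1}\cdots s_2 s_1 s_{1'} s_2\cdots s_k$ for $1\le k\le n-1$; $\ell$ is Coxeter length with respect to $\{s_{1'},s_1,\dots,s_{n-1}\}$. *)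

theory Defs
  imports Main
begin

text \<open>Generators of D_n: G' is s_{1'}, G i is s_i (valid for 1 <= i <= n-1).
  Group elements are represented by words (lists of generators) modulo the
  congruence generated by the Coxeter relators (each relator equal to the empty word).
  Since every generator is an involution, this monoid presentation presents the group D_n.\<close>

datatype gen = G' | G nat

definition valid :: "nat \<Rightarrow> gen set" where
  "valid n = insert G' {G i | i. 1 \<le> i \<and> i \<le> n - 1}"

definition relators :: "nat \<Rightarrow> gen list set" where
  "relators n =
     {[s, s] | s. s \<in> valid n}
   \<union> {concat (replicate 3 [G i, G (i+1)]) | i. 1 \<le> i \<and> i + 1 \<le> n - 1}
   \<union> {concat (replicate 2 [G i, G j]) | i j. 1 \<le> i \<and> i \<le> n - 1 \<and> 1 \<le> j \<and> j \<le> n - 1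
                                           \<and> (i + 2 \<le> j \<or> j + 2 \<le> i)}
   \<union> {concat (replicate 3 [G', G 2]) | x :: unit. 2 \<le> n - 1}
   \<union> {concat (replicate 2 [G', G i]) | i. 1 \<le> i \<and> i \<le> n - 1 \<and> i \<noteq> 2}"

inductive eqv :: "nat \<Rightarrow> gen list \<Rightarrow> gen list \<Rightarrow> bool" for n where
  eqv_refl: "eqv n x x"
| eqv_sym: "eqv n x y \<Longrightarrow> eqv n y x"
| eqv_trans: "eqv n x y \<Longrightarrow> eqv n y z \<Longrightarrow> eqv n x z"
| eqv_rel: "r \<in> relators n \<Longrightarrow> eqv n (u @ r @ v) (u @ v)"

definition len :: "nat \<Rightarrow> gen list \<Rightarrow> nat" where
  "len n x = (LEAST k. \<exists>y. set y \<subseteq> valid n \<and> eqv n x y \<and> length y = k)"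

definition wD :: "nat \<Rightarrow> gen list" where
  "wD k = map G (rev [1..<k+1]) @ [G'] @ map G [2..<k+1]"

definition piD :: "nat \<Rightarrow> nat \<Rightarrow> gen list" where
  "piD j r = map G (rev [j - r..<j+1])"

end

theory Submission
  imports Defs
begin

(* The relation follows by induction on r from w_m s_m = s_m w_{m-1}, which holds because
   w_m = s_m w_{m-1} s_m.

   For the length, let D_n act on {+-1, ..., +-n} by signed permutations: s_i swaps i with i+1
   and -i with -i-1, and s_{1'} swaps 1 with -2 and -1 with 2.  Right multiplication by a
   generator changes the number of ordered pairs (x, y) with x + y > 0 that are sent to a pair
   of negative sum by at most 2, so this number is at most twice the length.  Counting such
   pairs for pi_{j,r} and for w_j pi_{j,r} shows that the words pi_{j,r} and
   pi_{j,r} w_{j-r-1} are reduced. *)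

lemma eqv_append_cong: "eqv n x y \<Longrightarrow> eqv n (u @ x @ v) (u @ y @ v)"
proof (induction rule: eqv.induct)
  case (eqv_refl x)
  show ?case by (rule eqv.eqv_refl)
next
  case (eqv_sym x y)
  show ?case using eqv_sym.IH by (rule eqv.eqv_sym)
next
  case (eqv_trans x y z)
  show ?case using eqv_trans.IH by (rule eqv.eqv_trans)
next
  case (eqv_rel r u' v')
  then show ?case using eqv.eqv_rel[of r n "u @ u'" "v' @ v"] by simp
qed

declare eqv.eqv_trans [trans]

lemma wD_Suc:
  assumes "2 \<le> k"
  shows "wD k = G k # wD (k - 1) @ [G k]"
proof -
  obtain m where "k = Suc m" "1 \<le> m"
    using assms by (cases k) auto
  then show ?thesis by (simp add: wD_def upt_Suc_append)
qed

lemma piD_Suc: "r < j \<Longrightarrow> piD j (Suc r) = piD j r @ [G (j - Suc r)]"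
  by (simp add: piD_def upt_conv_Cons Suc_diff_Suc)

lemma set_wD_subset_valid: "k \<le> n - 1 \<Longrightarrow> set (wD k) \<subseteq> valid n"
  by (auto simp: wD_def valid_def)

lemma length_wD: "1 \<le> k \<Longrightarrow> length (wD k) = 2 * k"
  by (auto simp: wD_def)

lemma set_piD_subset_valid: "r < j \<Longrightarrow> j \<le> n - 1 \<Longrightarrow> set (piD j r) \<subseteq> valid n"
  by (auto simp: piD_def valid_def)

lemma length_piD: "r \<le> j \<Longrightarrow> length (piD j r) = r + 1"
  by (simp add: piD_def)

lemma wD_append_G_eqv:
  assumes "2 \<le> m" "m \<le> n - 1"
  shows "eqv n (wD m @ [G m]) (G m # wD (m - 1))"
proof -
  have "[G m, G m] \<in> relators n"
    using assms unfolding relators_def valid_def by auto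
  from eqv.eqv_rel[OF this, of "G m # wD (m - 1)" "[]"] show ?thesis
    using wD_Suc[OF assms(1)] by simp
qed

lemma wD_piD_eqv:
  assumes "2 \<le> j" "j \<le> n - 1" "r \<le> j - 2"
  shows "eqv n (wD j @ piD j r) (piD j r @ wD (j - r - 1))"
  using assms(3)
proof (induction r)
  case 0
  then show ?case
    using wD_append_G_eqv[OF assms(1,2)] by (simp add: piD_def)
next
  case (Suc r)
  let ?m = "j - r - 1"
  have m: "2 \<le> ?m" "?m \<le> n - 1" using Suc.prems assms by auto
  have "eqv n (wD j @ piD j r @ [G ?m]) (piD j r @ wD ?m @ [G ?m])"
    using eqv_append_cong[OF Suc.IH, of "[]" "[G ?m]"] Suc.prems by simp
  also have "eqv n \<dots> (piD j r @ G ?m # wD (?m - 1))"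
    using eqv_append_cong[OF wD_append_G_eqv[OF m], of "piD j r" "[]"] by simp
  finally show ?case
    using Suc.prems assms by (simp add: piD_Suc)
qed

definition signed_swap :: "int \<Rightarrow> int \<Rightarrow> int \<Rightarrow> int" where
  "signed_swap a b x =
     (if x = a then b else if x = b then a else if x = -a then -b else if x = -b then -a else x)"

lemma signed_swap_involution: "a \<noteq> 0 \<Longrightarrow> b \<noteq> 0 \<Longrightarrow> signed_swap a b (signed_swap a b x) = x"
  unfolding signed_swap_def by auto

lemma signed_swap_square: "a \<noteq> 0 \<Longrightarrow> b \<noteq> 0 \<Longrightarrow> signed_swap a b ^^ 2 = id"
  by (simp add: fun_eq_iff numeral_eq_Suc signed_swap_involution)

lemma signed_swap_braid:
  assumes "0 < \<bar>a\<bar>" "\<bar>a\<bar> < \<bar>b\<bar>" "\<bar>b\<bar> < \<bar>c\<bar>"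
  shows "(signed_swap a b \<circ> signed_swap b c) ^^ 3 = id"
proof
  have ne: "a \<noteq> 0" "b \<noteq> 0" "c \<noteq> 0" "a \<noteq> b" "a \<noteq> c" "b \<noteq> c"
    "a \<noteq> -b" "a \<noteq> -c" "b \<noteq> -c" "-a \<noteq> b" "-a \<noteq> c" "-b \<noteq> c"
    using assms by auto
  fix x
  consider "x = a" | "x = -a" | "x = b" | "x = -b" | "x = c" | "x = -c" | "x \<notin> {a, -a, b, -b, c, -c}"
    by blast
  then show "((signed_swap a b \<circ> signed_swap b c) ^^ 3) x = id x"
    by cases (simp_all add: signed_swap_def numeral_eq_Suc ne ne[symmetric])
qed

lemma signed_swap_fixed: "\<bar>x\<bar> \<noteq> \<bar>a\<bar> \<Longrightarrow> \<bar>x\<bar> \<noteq> \<bar>b\<bar> \<Longrightarrow> signed_swap a b x = x"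
  unfolding signed_swap_def by auto

lemma signed_swap_support:
  "\<bar>x\<bar> = \<bar>a\<bar> \<or> \<bar>x\<bar> = \<bar>b\<bar> \<Longrightarrow> \<bar>signed_swap a b x\<bar> = \<bar>a\<bar> \<or> \<bar>signed_swap a b x\<bar> = \<bar>b\<bar>"
  unfolding signed_swap_def by auto

lemma signed_swap_disjoint_commute:
  assumes "\<bar>a\<bar> \<noteq> \<bar>c\<bar>" "\<bar>a\<bar> \<noteq> \<bar>d\<bar>" "\<bar>b\<bar> \<noteq> \<bar>c\<bar>" "\<bar>b\<bar> \<noteq> \<bar>d\<bar>"
  shows "signed_swap a b (signed_swap c d x) = signed_swap c d (signed_swap a b x)"
proof -
  consider "\<bar>x\<bar> = \<bar>a\<bar> \<or> \<bar>x\<bar> = \<bar>b\<bar>" | "\<bar>x\<bar> = \<bar>c\<bar> \<or> \<bar>x\<bar> = \<bar>d\<bar>"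
    | "\<bar>x\<bar> \<noteq> \<bar>a\<bar>" "\<bar>x\<bar> \<noteq> \<bar>b\<bar>" "\<bar>x\<bar> \<noteq> \<bar>c\<bar>" "\<bar>x\<bar> \<noteq> \<bar>d\<bar>"
    by blast
  then show ?thesis
  proof cases
    case 1
    have "signed_swap c d x = x"
      using 1 assms by (intro signed_swap_fixed) auto
    moreover have "signed_swap c d (signed_swap a b x) = signed_swap a b x"
      using signed_swap_support[OF 1] assms by (intro signed_swap_fixed) auto
    ultimately show ?thesis by simp
  next
    case 2
    have "signed_swap a b x = x"
      using 2 assms by (intro signed_swap_fixed) auto
    moreover have "signed_swap a b (signed_swap c d x) = signed_swap c d x"
      using signed_swap_support[OF 2] assms by (intro signed_swap_fixed) auto
    ultimately show ?thesis by simp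
  qed (simp add: signed_swap_fixed)
qed

lemma signed_swap_disjoint_relation:
  assumes "a \<noteq> 0" "b \<noteq> 0" "c \<noteq> 0" "d \<noteq> 0"
    and "\<bar>a\<bar> \<noteq> \<bar>c\<bar>" "\<bar>a\<bar> \<noteq> \<bar>d\<bar>" "\<bar>b\<bar> \<noteq> \<bar>c\<bar>" "\<bar>b\<bar> \<noteq> \<bar>d\<bar>"
  shows "(signed_swap a b \<circ> signed_swap c d) ^^ 2 = id"
  using signed_swap_disjoint_commute[OF assms(5-8)] assms(1-4)
  by (simp add: fun_eq_iff numeral_eq_Suc signed_swap_involution)

lemma signed_swap_negated_relation:
  assumes "a \<noteq> 0" "b \<noteq> 0" "\<bar>a\<bar> \<noteq> \<bar>b\<bar>"
  shows "(signed_swap a b \<circ> signed_swap (-a) b) ^^ 2 = id"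
  using assms by (auto simp: fun_eq_iff signed_swap_def numeral_eq_Suc)

lemma signed_swap_range:
  assumes "0 < \<bar>a\<bar>" "\<bar>a\<bar> \<le> N" "0 < \<bar>b\<bar>" "\<bar>b\<bar> \<le> N" "x \<noteq> 0" "\<bar>x\<bar> \<le> N"
  shows "signed_swap a b x \<noteq> 0 \<and> \<bar>signed_swap a b x\<bar> \<le> N"
  using assms unfolding signed_swap_def by auto

(* The hypothesis singles out the generators: for other signed swaps the lemma fails,
   e.g. for signed_swap (-3) 4 at (x, y) = (1, 3). *)
lemma signed_swap_sum_pos:
  assumes "0 < a \<and> b = a + 1 \<or> a = -1 \<and> b = 2"
    and "x \<noteq> y" "x \<noteq> 0" "y \<noteq> 0" "0 < x + y" "(x, y) \<noteq> (-a, b)" "(x, y) \<noteq> (b, -a)"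
  shows "0 < signed_swap a b x + signed_swap a b y"
  using assms(1)
proof (elim disjE conjE)
  assume "0 < a" "b = a + 1"
  then show ?thesis
    using assms(2-7) by (auto simp: signed_swap_def)
next
  assume "a = -1" "b = 2"
  then show ?thesis
    using assms(2-7) by (auto simp: signed_swap_def)
qed

fun gen_act :: "gen \<Rightarrow> int \<Rightarrow> int" where
  "gen_act G' = signed_swap (-1) 2"
| "gen_act (G i) = signed_swap (int i) (int i + 1)"

primrec word_act :: "gen list \<Rightarrow> int \<Rightarrow> int" where
  "word_act [] = id"
| "word_act (g # w) = gen_act g \<circ> word_act w"

lemma gen_act_valid:
  assumes "g \<in> valid n" "2 \<le> n"
  obtains a b where "gen_act g = signed_swap a b" "0 < a \<and> b = a + 1 \<or> a = -1 \<and> b = 2" "b \<le> int n"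
  using assms by (cases g) (auto simp: valid_def)

lemma word_act_append: "word_act (u @ v) = word_act u \<circ> word_act v"
  by (induction u) auto

lemma word_act_concat_replicate: "word_act (concat (replicate k w)) = word_act w ^^ k"
  by (induction k) (auto simp: word_act_append)

lemma word_act_relator: "r \<in> relators n \<Longrightarrow> word_act r = id"
proof -
  assume "r \<in> relators n"
  then consider (square) s where "r = [s, s]" "s \<in> valid n"
    | (braid) i where "r = concat (replicate 3 [G i, G (i + 1)])" "1 \<le> i"
    | (commute) i j where "r = concat (replicate 2 [G i, G j])" "1 \<le> i" "1 \<le> j" "i + 2 \<le> j \<or> j + 2 \<le> i"
    | (braid') "r = concat (replicate 3 [G', G 2])"
    | (commute') i where "r = concat (replicate 2 [G', G i])" "1 \<le> i" "i \<noteq> 2"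
    unfolding relators_def by blast
  then show ?thesis
  proof cases
    case square
    then show ?thesis
      using signed_swap_square[of "-1" 2] signed_swap_square[of "int i" "int i + 1" for i]
      by (cases s) (auto simp: numeral_eq_Suc valid_def)
  next
    case braid
    then show ?thesis
      using signed_swap_braid[of "int i" "int i + 1" "int i + 2"]
      by (simp add: word_act_concat_replicate ac_simps)
  next
    case commute
    then show ?thesis
      using signed_swap_disjoint_relation[of "int i" "int i + 1" "int j" "int j + 1"]
      by (auto simp: word_act_concat_replicate)
  next
    case braid'
    then show ?thesis
      using signed_swap_braid[of "-1" 2 3] by (simp add: word_act_concat_replicate)
  next
    case commute'
    then consider "i = 1" | "3 \<le> i" by linarith
    then show ?thesis
      using signed_swap_negated_relation[of "-1" 2]
        signed_swap_disjoint_relation[of "-1" 2 "int i" "int i + 1"] commute'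
      by cases (auto simp: word_act_concat_replicate)
  qed
qed

lemma word_act_eqv: "eqv n x y \<Longrightarrow> word_act x = word_act y"
  by (induction rule: eqv.induct) (auto simp: word_act_append word_act_relator)

definition inversions :: "nat \<Rightarrow> (int \<Rightarrow> int) \<Rightarrow> (int \<times> int) set" where
  "inversions n p = {(x, y). x \<noteq> y \<and> x \<noteq> 0 \<and> y \<noteq> 0 \<and> \<bar>x\<bar> \<le> int n \<and> \<bar>y\<bar> \<le> int n
                              \<and> 0 < x + y \<and> p x + p y < 0}"

lemma finite_inversions: "finite (inversions n p)"
proof (rule finite_subset)
  show "inversions n p \<subseteq> {- int n..int n} \<times> {- int n..int n}"
    by (auto simp: inversions_def abs_le_iff)
qed simp

lemma inversions_id: "inversions n id = {}"
  by (auto simp: inversions_def)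

lemma card_inversions_comp_signed_swap:
  assumes simple: "0 < a \<and> b = a + 1 \<or> a = -1 \<and> b = 2" and "b \<le> int n"
  shows "card (inversions n (p \<circ> signed_swap a b)) \<le> card (inversions n p) + 2"
proof -
  let ?s = "signed_swap a b"
  let ?I = "inversions n (p \<circ> ?s)"
  let ?R = "{(-a, b), (b, -a)}"
  have ab: "a \<noteq> 0" "b \<noteq> 0" "0 < \<bar>a\<bar>" "\<bar>a\<bar> \<le> int n" "0 < \<bar>b\<bar>" "\<bar>b\<bar> \<le> int n"
    using assms by auto
  have inj: "inj ?s"
    by (metis injI signed_swap_involution ab(1,2))
  have "(?s x, ?s y) \<in> inversions n p" if xy: "(x, y) \<in> ?I - ?R" for x y
  proof -
    from xy have "x \<noteq> y" "x \<noteq> 0" "y \<noteq> 0" "\<bar>x\<bar> \<le> int n" "\<bar>y\<bar> \<le> int n" "0 < x + y"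
      "p (?s x) + p (?s y) < 0" "(x, y) \<noteq> (-a, b)" "(x, y) \<noteq> (b, -a)"
      by (auto simp: inversions_def)
    with signed_swap_range[OF ab(3-6)] signed_swap_sum_pos[OF simple] inj_eq[OF inj]
    show ?thesis
      by (simp add: inversions_def)
  qed
  then have "map_prod ?s ?s ` (?I - ?R) \<subseteq> inversions n p"
    by auto
  then have "card (?I - ?R) \<le> card (inversions n p)"
    by (rule card_inj_on_le[OF inj_on_subset[OF prod.inj_map[OF inj inj] subset_UNIV] _ finite_inversions])
  moreover have "card ?I - card ?R \<le> card (?I - ?R)"
    by (rule diff_card_le_card_Diff) simp
  moreover have "card ?R \<le> 2"
    by (rule card_insert_le_m1) simp_all
  ultimately show ?thesis by linarith
qed

lemma card_inversions_word_act:
  "set w \<subseteq> valid n \<Longrightarrow> 2 \<le> n \<Longrightarrow> card (inversions n (word_act w)) \<le> 2 * length w"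
proof (induction w rule: rev_induct)
  case Nil
  show ?case using inversions_id[of n] by (simp add: id_def)
next
  case (snoc g w)
  have "g \<in> valid n" "set w \<subseteq> valid n"
    using snoc.prems(1) by simp_all
  then obtain a b where "gen_act g = signed_swap a b" "0 < a \<and> b = a + 1 \<or> a = -1 \<and> b = 2" "b \<le> int n"
    using gen_act_valid snoc.prems(2) by metis
  then have "card (inversions n (word_act (w @ [g]))) \<le> card (inversions n (word_act w)) + 2"
    using card_inversions_comp_signed_swap by (simp add: word_act_append)
  with snoc show ?case by simp
qed

lemma len_le_length: "set y \<subseteq> valid n \<Longrightarrow> eqv n x y \<Longrightarrow> len n x \<le> length y"
  unfolding len_def by (rule Least_le) blast

lemma card_inversions_le_len:
  assumes "set y \<subseteq> valid n" "eqv n x y" "2 \<le> n"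
  shows "card (inversions n (word_act x)) \<le> 2 * len n x"
proof -
  obtain z where z: "set z \<subseteq> valid n" "eqv n x z" "length z = len n x"
    using LeastI_ex[of "\<lambda>k. \<exists>z. set z \<subseteq> valid n \<and> eqv n x z \<and> length z = k"] assms
    unfolding len_def by blast
  from z(2) have "word_act x = word_act z" by (rule word_act_eqv)
  then show ?thesis
    using card_inversions_word_act[OF z(1) assms(3)] z(3) by simp
qed

lemma len_eqI:
  assumes "set y \<subseteq> valid n" "eqv n x y" "2 \<le> n"
    and "2 * length y \<le> card (inversions n (word_act x))"
  shows "len n x = length y"
  using len_le_length[OF assms(1,2)] card_inversions_le_len[OF assms(1-3)] assms(4) by linarith

definition flip_signs :: "int set \<Rightarrow> int \<Rightarrow> int" where
  "flip_signs S x = (if \<bar>x\<bar> \<in> S then -x else x)"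

definition cycle_act :: "int \<Rightarrow> int \<Rightarrow> int \<Rightarrow> int" where
  "cycle_act a b x =
     (if x = a then b + 1 else if x = -a then -b - 1
      else if a < x \<and> x \<le> b + 1 then x - 1 else if -b - 1 \<le> x \<and> x < -a then x + 1 else x)"

lemma word_act_wD: "1 \<le> k \<Longrightarrow> word_act (wD k) = flip_signs {1, int k + 1}"
proof (induction k rule: nat_induct_at_least)
  case base
  have "wD 1 = [G 1, G']" by (simp add: wD_def)
  then show ?case
    by (auto simp: fun_eq_iff signed_swap_def flip_signs_def)
next
  case (Suc k)
  define K where "K = int k"
  have K: "1 \<le> K" using Suc.hyps by (simp add: K_def)
  have "word_act (wD (Suc k)) = signed_swap (K + 1) (K + 2) \<circ> flip_signs {1, K + 1} \<circ> signed_swap (K + 1) (K + 2)"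
    using Suc by (simp add: wD_Suc word_act_append K_def ac_simps comp_assoc)
  also have "\<dots> = flip_signs {1, K + 2}"
  proof
    fix x
    consider "x = K + 1" | "x = -K - 1" | "x = K + 2" | "x = -K - 2" | "x \<notin> {K + 1, -K - 1, K + 2, -K - 2}"
      by blast
    then show "(signed_swap (K + 1) (K + 2) \<circ> flip_signs {1, K + 1} \<circ> signed_swap (K + 1) (K + 2)) x = flip_signs {1, K + 2} x"
      by cases (use K in \<open>auto simp: signed_swap_def flip_signs_def\<close>)
  qed
  finally show ?case by (simp add: K_def ac_simps)
qed

lemma word_act_descending:
  assumes "1 \<le> a" "a \<le> b"
  shows "word_act (map G (rev [a..<b + 1])) = cycle_act (int a) (int b)"
  using assms(2)
proof (induction b rule: nat_induct_at_least)
  case base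
  define A where "A = int a"
  have "1 \<le> A" using assms(1) by (simp add: A_def)
  then show ?case
    by (auto simp: fun_eq_iff signed_swap_def cycle_act_def A_def[symmetric])
next
  case (Suc b)
  define A where "A = int a"
  define B where "B = int b"
  have AB: "1 \<le> A" "A \<le> B" using Suc assms(1) by (simp_all add: A_def B_def)
  have "map G (rev [a..<Suc b + 1]) = G (Suc b) # map G (rev [a..<b + 1])"
    using Suc by simp
  then have "word_act (map G (rev [a..<Suc b + 1])) = gen_act (G (Suc b)) \<circ> cycle_act A B"
    by (simp only: word_act.simps Suc.IH A_def B_def)
  also have "\<dots> = signed_swap (B + 1) (B + 2) \<circ> cycle_act A B"
    by (simp add: B_def ac_simps)
  also have "\<dots> = cycle_act A (B + 1)"
  proof
    fix x
    consider "x = A" | "x = -A" | "x = B + 1" | "x = B + 2" | "x = -B - 1" | "x = -B - 2"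
      | "x \<notin> {A, -A, B + 1, B + 2, -B - 1, -B - 2}"
      by blast
    then show "(signed_swap (B + 1) (B + 2) \<circ> cycle_act A B) x = cycle_act A (B + 1) x"
      by cases (use AB in \<open>auto simp: signed_swap_def cycle_act_def\<close>)
  qed
  also have "\<dots> = cycle_act (int a) (int (Suc b))"
    by (simp add: A_def B_def add.commute)
  finally show ?case .
qed

lemma card_pairs_through:
  assumes "finite C" "c \<notin> C"
  shows "card ((\<lambda>y. (c, y)) ` C \<union> (\<lambda>y. (y, c)) ` C) = 2 * card C"
proof -
  have "card ((\<lambda>y. (c, y)) ` C \<union> (\<lambda>y. (y, c)) ` C) = card ((\<lambda>y. (c, y)) ` C) + card ((\<lambda>y. (y, c)) ` C)"
    using assms by (intro card_Un_disjoint) auto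
  also have "\<dots> = 2 * card C"
    by (simp add: card_image inj_on_def)
  finally show ?thesis .
qed

lemma card_inversions_cycle_act:
  assumes "1 \<le> a" "a \<le> b" "b + 1 \<le> n"
  shows "2 * (b + 1 - a) \<le> card (inversions n (cycle_act (int a) (int b)))"
proof -
  let ?C = "{int a + 1..int b + 1}"
  let ?S = "(\<lambda>y. (- int a, y)) ` ?C \<union> (\<lambda>y. (y, - int a)) ` ?C"
  have "?S \<subseteq> inversions n (cycle_act (int a) (int b))"
    using assms by (auto simp: inversions_def cycle_act_def)
  then have "card ?S \<le> card (inversions n (cycle_act (int a) (int b)))"
    by (rule card_mono[OF finite_inversions])
  moreover have "card ?S = 2 * (b + 1 - a)"
    using assms by (subst card_pairs_through) auto
  ultimately show ?thesis by simp
qed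

lemma card_inversions_flip_cycle:
  assumes "1 \<le> a" "a \<le> b" "b + 1 \<le> n"
  shows "2 * (a + b - 1) \<le> card (inversions n (flip_signs {1, int b + 1} \<circ> cycle_act (int a) (int b)))"
proof -
  let ?p = "flip_signs {1, int b + 1} \<circ> cycle_act (int a) (int b)"
  let ?C = "{1 - int a..int b + 1} - {0, int a}"
  let ?S = "(\<lambda>y. (int a, y)) ` ?C \<union> (\<lambda>y. (y, int a)) ` ?C"
  have "?p (int a) = - int b - 1"
    using assms by (simp add: flip_signs_def cycle_act_def)
  moreover have "\<bar>?p y\<bar> \<le> int b" if "y \<in> ?C" for y
    using assms that by (auto simp: flip_signs_def cycle_act_def)
  ultimately have "?S \<subseteq> inversions n ?p"
    using assms by (fastforce simp: inversions_def)
  then have "card ?S \<le> card (inversions n ?p)"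
    by (rule card_mono[OF finite_inversions])
  moreover have "card ?C = a + b - 1"
    using assms by (simp add: card_Diff_subset)
  then have "card ?S = 2 * (a + b - 1)"
    by (subst card_pairs_through) auto
  ultimately show ?thesis by simp
qed

theorem mainTheorem13:
  fixes n j r :: nat
  assumes "2 \<le> n" and "2 \<le> j" and "j \<le> n - 1" and "r \<le> j - 2"
  shows "eqv n (wD j @ piD j r) (piD j r @ wD (j - r - 1))
         \<and> len n (wD j @ piD j r) = len n (piD j r) + 2 * (j - r - 1)"
proof
  show eqv: "eqv n (wD j @ piD j r) (piD j r @ wD (j - r - 1))"
    using wD_piD_eqv assms(2-4) .
  define k where "k = j - r"
  have k: "1 \<le> k" "k \<le> j" "j + 1 \<le> n" "r + 1 = j + 1 - k" "j - r - 1 = k - 1"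
    using assms by (auto simp: k_def)
  have valid: "set (piD j r) \<subseteq> valid n" "set (piD j r @ wD (k - 1)) \<subseteq> valid n"
    using assms k by (auto simp: set_piD_subset_valid set_wD_subset_valid)
  have pi: "word_act (piD j r) = cycle_act (int k) (int j)"
    using word_act_descending[of k j] k by (simp add: piD_def k_def)
  have "len n (piD j r) = r + 1"
    using len_eqI[OF valid(1) eqv_refl assms(1)] card_inversions_cycle_act[OF k(1-3)] k pi assms
    by (simp add: length_piD)
  moreover have "len n (wD j @ piD j r) = r + 1 + 2 * (k - 1)"
    using len_eqI[OF valid(2) eqv[unfolded k(5)] assms(1)] card_inversions_flip_cycle[OF k(1-3)] k pi assms
    by (simp add: length_piD length_wD word_act_append word_act_wD)
  ultimately show "len n (wD j @ piD j r) = len n (piD j r) + 2 * (j - r - 1)"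
    using k(5) by simp
qed

end
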